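(* For $a=(a_0,\dots,a_{d-1})\in\mathbb{R}^d$ let $P(X)=X^d+\sum_{i=0}^{d-1}a_iX^i$, and let $\Gamma$ be the symmetric bilinear first-order differential operator on functions of $a$ (i.e. $\Gamma(f,g)=\sum_{i,j}\Gamma(a_i,a_j)\partial_{a_i}f\,\partial_{a_j}g$) determined by $$\sum_{i,j}X^iY^j\,\Gamma(a_i,a_j)=\frac{1}{Y-X}\big(P'(X)P(Y)-P'(Y)P(X)\big).$$ Let $\mathrm{disc}(P)$ denote the discriminant of $P$, a polynomial in $a$ which equals $\prod_{i<j}(x_j-x_i)^2$ when $x_1,\dots,x_d$ are the roots of $P$. Then, wherever $\mathrm{disc}(P)\neq0$, $$\Gamma\big(P(X),\log\mathrm{disc}(P)\big)=-P''(X),$$ where $\Gamma(f,\log g)$ means $\Gamma(f,g)/g$. *)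

theory Defs
  imports "HOL-Analysis.Analysis" "HOL-Computational_Algebra.Polynomial"
begin

definition Pol :: "nat \<Rightarrow> (nat \<Rightarrow> real) \<Rightarrow> real poly" where
  "Pol d a = monom 1 d + (\<Sum>i<d. monom (a i) i)"

definition roots_list :: "nat \<Rightarrow> (nat \<Rightarrow> real) \<Rightarrow> complex list" where
  "roots_list d a = (SOME xs. length xs = d \<and>
      map_poly complex_of_real (Pol d a) = (\<Prod>x\<leftarrow>xs. [:-x, 1:]))"

definition disc :: "nat \<Rightarrow> (nat \<Rightarrow> real) \<Rightarrow> real" where
  "disc d a = Re (let xs = roots_list d a in
      \<Prod>j<d. \<Prod>i<j. (xs ! j - xs ! i)^2)"

definition disc_partial :: "nat \<Rightarrow> (nat \<Rightarrow> real) \<Rightarrow> nat \<Rightarrow> real" where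
  "disc_partial d a j = deriv (\<lambda>t. disc d (a(j := t))) (a j)"

end

theory Submission
  imports Defs "HOL-Complex_Analysis.Complex_Analysis"
    "HOL-Computational_Algebra.Fundamental_Theorem_Algebra"
begin

text \<open>
  Over \<open>\<complex>\<close>, the discriminant of the monic polynomial \<open>P\<close> is, up to the sign
  \<open>(-1)^(d(d-1)/2)\<close>, the product of \<open>P'(x)\<close> over its roots \<open>x\<close>. If it is nonzero the roots
  are simple, so under a perturbation \<open>P + w Q\<close> each root moves holomorphically in \<open>w\<close> with
  velocity \<open>-Q(x)/P'(x)\<close> (local inverse of \<open>z \<mapsto> -P(z)/Q(z)\<close>), and the logarithmic derivative of
  the discriminant in direction \<open>Q\<close> is \<open>\<Sum>\<^sub>x (Q/P')'(x)\<close>. This is linear in \<open>Q\<close>, so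
  \<open>\<Gamma>(P(X), log disc)\<close> is the same sum for \<open>Q = K\<close>, where \<open>K(Y) = \<Gamma>(P(X), P(Y))\<close> satisfies
  \<open>(Y - X) K(Y) = P'(X) P(Y) - P'(Y) P(X)\<close>. Evaluating this identity and its derivative at a
  root \<open>x\<close> gives \<open>(K/P')'(x) = P(X)/(X - x)^2 - P'(X)/(X - x)\<close>, and the partial fraction
  expansions of \<open>P'/P\<close> and \<open>(P'/P)'\<close> sum this to \<open>-P''(X)\<close>. This proves the identity for \<open>X\<close>
  off the roots of \<open>P\<close>; both sides are polynomials in \<open>X\<close>, so it holds everywhere.
\<close>

lemma poly_map_poly_of_real:
  "poly (map_poly of_real p) (of_real x) = (of_real (poly p x) :: 'a::real_field)"
  by (induction p) (auto simp: map_poly_pCons)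

lemma pderiv_map_poly_of_real:
  "pderiv (map_poly of_real p) = (map_poly of_real (pderiv p) :: 'a::real_field poly)"
  by (rule poly_eqI) (simp add: coeff_pderiv coeff_map_poly)

lemma complex_poly_eqI_on_reals:
  fixes p q :: "complex poly"
  assumes "\<And>x::real. poly p (of_real x) = poly q (of_real x)"
  shows "p = q"
proof (rule ccontr)
  assume "p \<noteq> q"
  then have "finite {z. poly (p - q) z = 0}" by (intro poly_roots_finite) simp
  moreover have "range complex_of_real \<subseteq> {z. poly (p - q) z = 0}" using assms by auto
  moreover have "infinite (range complex_of_real)"
    using finite_imageD[OF _ inj_of_real] infinite_UNIV_char_0 by auto
  ultimately show False using finite_subset by blast
qed

lemma poly_eqI_off_roots:
  fixes p q r :: "'a::{idom, ring_char_0} poly"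
  assumes "r \<noteq> 0" and "\<And>x. poly r x \<noteq> 0 \<Longrightarrow> poly p x = poly q x"
  shows "p = q"
proof -
  have "poly ((p - q) * r) x = 0" for x using assms(2)[of x] by auto
  then have "(p - q) * r = 0" using poly_all_0_iff_0 by blast
  then show ?thesis using assms(1) by simp
qed

lemma proots_prod_list_linear_factors: "proots (\<Prod>x\<leftarrow>xs. [:-x, 1:]) = mset (xs :: 'a::idom list)"
proof (induction xs)
  case (Cons x xs)
  have "(\<Prod>x\<leftarrow>xs. [:-x, 1:]) \<noteq> 0" by (auto simp: prod_list_zero_iff)
  then show ?case
    using Cons.IH by (simp add: proots_mult del: mult_pCons_left)
qed simp

lemma proots_rsquarefree:
  assumes "rsquarefree p"
  shows "proots p = mset_set {x. poly p x = 0}"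
proof -
  have "p \<noteq> 0" using assms by (simp add: rsquarefree_def)
  show ?thesis
  proof (rule multiset_eqI)
    fix x
    show "count (proots p) x = count (mset_set {x. poly p x = 0}) x"
      using assms \<open>p \<noteq> 0\<close>
      by (cases "poly p x = 0") (auto simp: poly_roots_finite rsquarefree_root_order order_0I)
  qed
qed

lemma proots_eq_image_mset:
  fixes p :: "'a::idom poly"
  assumes "finite S" and "inj_on y S" and "\<And>x. x \<in> S \<Longrightarrow> poly p (y x) = 0"
    and "p \<noteq> 0" and "degree p \<le> card S"
  shows "proots p = image_mset y (mset_set S)"
proof -
  have M: "image_mset y (mset_set S) = mset_set (y ` S)"
    using assms(2) by (rule image_mset_mset_set)
  have sub: "mset_set (y ` S) \<subseteq># proots p"
  proof (rule mset_subset_eqI)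
    fix v
    show "count (mset_set (y ` S)) v \<le> count (proots p) v"
      using assms(1,3,4)
      by (cases "v \<in> y ` S") (auto simp: count_mset_set order_root Suc_leI)
  qed
  have "size (proots p) \<le> size (mset_set (y ` S))"
    using size_proots_le[of p] assms(2,5) by (simp add: card_image)
  then show ?thesis
    using sub M by (metis mset_subset_size not_less subset_mset.le_imp_less_or_eq)
qed

lemma poly_pderiv_prod_linear_factors_at_root:
  fixes x :: "nat \<Rightarrow> 'a::idom"
  assumes "k < n"
  shows "poly (pderiv (\<Prod>i<n. [:-x i, 1:])) (x k) = (\<Prod>i\<in>{..<n}-{k}. x k - x i)"
proof -
  have "poly (pderiv (\<Prod>i<n. [:-x i, 1:])) (x k) = (\<Sum>l<n. \<Prod>i\<in>{..<n}-{l}. x k - x i)"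
    by (simp add: pderiv_prod poly_sum poly_prod pderiv_pCons)
  also have "\<dots> = (\<Prod>i\<in>{..<n}-{k}. x k - x i)"
    using assms by (subst sum.remove[of _ k]) (auto intro!: sum.neutral simp: prod_zero_iff)
  finally show ?thesis .
qed

lemma prod_differences_off_diagonal:
  fixes x :: "nat \<Rightarrow> 'a::idom"
  shows "(\<Prod>k<n. \<Prod>i\<in>{..<n}-{k}. x k - x i)
    = (-1) ^ (n * (n - 1) div 2) * (\<Prod>j<n. \<Prod>i<j. (x j - x i)^2)"
proof (induction n)
  case (Suc n)
  have "(\<Prod>k<n. \<Prod>i\<in>{..<Suc n}-{k}. x k - x i)
      = (\<Prod>k<n. (x k - x n) * (\<Prod>i\<in>{..<n}-{k}. x k - x i))"
  proof (intro prod.cong refl)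
    fix k assume "k \<in> {..<n}"
    then have "{..<Suc n} - {k} = insert n ({..<n} - {k})" by auto
    then show "(\<Prod>i\<in>{..<Suc n}-{k}. x k - x i) = (x k - x n) * (\<Prod>i\<in>{..<n}-{k}. x k - x i)"
      by simp
  qed
  then have "(\<Prod>k<Suc n. \<Prod>i\<in>{..<Suc n}-{k}. x k - x i)
      = (\<Prod>k<n. (x k - x n) * (\<Prod>i\<in>{..<n}-{k}. x k - x i)) * (\<Prod>i<n. x n - x i)"
    by (simp add: lessThan_Suc)
  also have "(\<Prod>k<n. x k - x n) = (-1) ^ n * (\<Prod>k<n. x n - x k)"
    using prod.distrib[of "\<lambda>_. -1" "\<lambda>k. x n - x k" "{..<n}"] by simp
  then have "(\<Prod>k<n. (x k - x n) * (\<Prod>i\<in>{..<n}-{k}. x k - x i)) * (\<Prod>i<n. x n - x i)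
      = (\<Prod>k<n. \<Prod>i\<in>{..<n}-{k}. x k - x i) * ((-1) ^ n * (\<Prod>i<n. (x n - x i)^2))"
    by (simp add: prod.distrib power2_eq_square)
  also have "Suc n * (Suc n - 1) div 2 = n * (n - 1) div 2 + n"
    by (cases n) (simp_all add: algebra_simps)
  then have "(\<Prod>k<n. \<Prod>i\<in>{..<n}-{k}. x k - x i) * ((-1) ^ n * (\<Prod>i<n. (x n - x i)^2))
      = (-1) ^ (Suc n * (Suc n - 1) div 2) * (\<Prod>j<Suc n. \<Prod>i<j. (x j - x i)^2)"
    by (simp add: Suc.IH power_add)
  finally show ?case .
qed simp

lemma poly_pderiv_prod_linear_factors:
  fixes S :: "'a::field set"
  assumes "finite S" and "z \<notin> S"
  shows "poly (pderiv (\<Prod>x\<in>S. [:-x, 1:])) z = poly (\<Prod>x\<in>S. [:-x, 1:]) z * (\<Sum>x\<in>S. 1 / (z - x))"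
  using assms
proof (induction S rule: finite_induct)
  case (insert y S)
  define R where "R = (\<Prod>x\<in>S. [:-x, 1:])"
  have "z - y \<noteq> 0" using insert by auto
  have "poly (pderiv (\<Prod>x\<in>insert y S. [:-x, 1:])) z = poly R z + (z - y) * poly (pderiv R) z"
    using insert by (simp add: R_def pderiv_mult pderiv_pCons algebra_simps del: mult_pCons_left)
  also have "\<dots> = poly (\<Prod>x\<in>insert y S. [:-x, 1:]) z * (\<Sum>x\<in>insert y S. 1 / (z - x))"
    using insert \<open>z - y \<noteq> 0\<close> by (simp add: R_def field_simps)
  finally show ?case .
qed simp

lemma poly_pderiv2_prod_linear_factors:
  fixes S :: "'a::field set"
  assumes "finite S" and "z \<notin> S"
  shows "(poly (pderiv (\<Prod>x\<in>S. [:-x, 1:])) z)^2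
      - poly (\<Prod>x\<in>S. [:-x, 1:]) z * poly (pderiv (pderiv (\<Prod>x\<in>S. [:-x, 1:]))) z
    = (poly (\<Prod>x\<in>S. [:-x, 1:]) z)^2 * (\<Sum>x\<in>S. 1 / (z - x)^2)"
  using assms
proof (induction S rule: finite_induct)
  case (insert y S)
  define R where "R = (\<Prod>x\<in>S. [:-x, 1:])"
  define r r1 r2 L where "r = poly R z" and "r1 = poly (pderiv R) z"
    and "r2 = poly (pderiv (pderiv R)) z" and "L = z - y"
  have "L \<noteq> 0" using insert by (auto simp: L_def)
  have IH: "r1^2 - r * r2 = r^2 * (\<Sum>x\<in>S. 1 / (z - x)^2)"
    using insert by (simp add: R_def r_def r1_def r2_def)
  have R: "(\<Prod>x\<in>insert y S. [:-x, 1:]) = [:-y, 1:] * R"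
    using insert by (simp add: R_def del: mult_pCons_left)
  have d1: "pderiv ([:-y, 1:] * R) = R + [:-y, 1:] * pderiv R"
    by (simp add: pderiv_mult pderiv_pCons del: mult_pCons_left)
  have d2: "pderiv (R + [:-y, 1:] * pderiv R) = pderiv R + pderiv R + [:-y, 1:] * pderiv (pderiv R)"
    by (simp add: pderiv_add pderiv_mult pderiv_pCons del: mult_pCons_left)
  have "(poly (pderiv ([:-y, 1:] * R)) z)^2
      - poly ([:-y, 1:] * R) z * poly (pderiv (pderiv ([:-y, 1:] * R))) z
      = (r + L * r1)^2 - L * r * (r1 + r1 + L * r2)"
    unfolding d1 d2 by (simp add: r_def r1_def r2_def L_def del: mult_pCons_left)
  also have "\<dots> = r^2 + L^2 * (r1^2 - r * r2)"
    by (simp add: power2_eq_square algebra_simps)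
  also have "\<dots> = (L * r)^2 * ((\<Sum>x\<in>S. 1 / (z - x)^2) + 1 / L^2)"
    unfolding IH using \<open>L \<noteq> 0\<close> by (simp add: field_simps)
  also have "\<dots> = (poly ([:-y, 1:] * R) z)^2 * (\<Sum>x\<in>insert y S. 1 / (z - x)^2)"
    using insert by (simp add: r_def L_def del: mult_pCons_left)
  finally show ?case unfolding R .
qed simp

lemma sum_roots_partial_fractions:
  fixes S :: "'a::field set"
  assumes "finite S" and "z \<notin> S"
  defines "P \<equiv> \<Prod>x\<in>S. [:-x, 1:]"
  shows "poly P z * (\<Sum>x\<in>S. 1 / (z - x)^2) - poly (pderiv P) z * (\<Sum>x\<in>S. 1 / (z - x))
    = - poly (pderiv (pderiv P)) z"
proof -
  define s1 s2 where "s1 = (\<Sum>x\<in>S. 1 / (z - x))" and "s2 = (\<Sum>x\<in>S. 1 / (z - x)^2)"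
  have s1: "poly (pderiv P) z = poly P z * s1"
    using poly_pderiv_prod_linear_factors[OF assms(1,2)] unfolding P_def s1_def .
  have "(poly (pderiv P) z)^2 - poly P z * poly (pderiv (pderiv P)) z = (poly P z)^2 * s2"
    using poly_pderiv2_prod_linear_factors[OF assms(1,2)] unfolding P_def s2_def .
  then have "poly P z * (poly P z * s2 - poly (pderiv P) z * s1 + poly (pderiv (pderiv P)) z) = 0"
    unfolding s1 by (simp add: algebra_simps power2_eq_square)
  moreover have "poly P z \<noteq> 0"
    using assms(1,2) by (auto simp: P_def poly_prod prod_zero_iff)
  ultimately have "poly P z * s2 - poly (pderiv P) z * s1 + poly (pderiv (pderiv P)) z = 0"
    by simp
  then show ?thesis
    unfolding s1_def[symmetric] s2_def[symmetric] by (simp add: eq_neg_iff_add_eq_0)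
qed

section \<open>Perturbing a polynomial with simple roots\<close>

definition prod_pderiv_roots :: "complex poly \<Rightarrow> complex" where
  "prod_pderiv_roots p = (\<Prod>x\<in>#proots p. poly (pderiv p) x)"

lemma prod_pderiv_roots_rsquarefree:
  "rsquarefree p \<Longrightarrow> prod_pderiv_roots p = (\<Prod>x | poly p x = 0. poly (pderiv p) x)"
  by (simp add: prod_pderiv_roots_def proots_rsquarefree prod_unfold_prod_mset)

lemma simple_root_path:
  fixes P Q :: "complex poly"
  assumes root: "poly P x = 0" and simple: "poly (pderiv P) x \<noteq> 0"
  obtains g where "g 0 = x" and "(g has_field_derivative - poly Q x / poly (pderiv P) x) (at 0)"
    and "eventually (\<lambda>w. poly (P + smult w Q) (g w) = 0) (nhds 0)"
proof (cases "poly Q x = 0")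
  case True
  then show ?thesis using root by (intro that[of "\<lambda>_. x"]) auto
next
  case False
  define S where "S = {z. poly Q z \<noteq> 0}"
  define h where "h z = - poly P z / poly Q z" for z
  \<comment> \<open>\<open>z\<close> is a root of \<open>P + h(z) Q\<close>, so a local inverse of \<open>h\<close> is the root path\<close>
  have "open S"
    unfolding S_def by (intro open_Collect_neq continuous_intros)
  have "x \<in> S" using False by (simp add: S_def)
  have hol: "h holomorphic_on S"
    unfolding h_def S_def by (intro holomorphic_intros) auto
  have "(h has_field_derivative - poly (pderiv P) x / poly Q x) (at x)"
    unfolding h_def using False root
    by (auto intro!: derivative_eq_intros simp: field_simps power2_eq_square)
  then have dh: "deriv h x = - poly (pderiv P) x / poly Q x" by (rule DERIV_imp_deriv)
  obtain r where r: "r > 0" "ball x r \<subseteq> S" "open (h ` ball x r)" "inj_on h (ball x r)"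
    using has_complex_derivative_locally_invertible[OF hol \<open>x \<in> S\<close> \<open>open S\<close>] dh simple False
    by auto
  obtain g where g: "g holomorphic_on h ` ball x r"
      "\<And>z. z \<in> ball x r \<Longrightarrow> deriv h z * deriv g (h z) = 1"
      "\<And>z. z \<in> ball x r \<Longrightarrow> g (h z) = z"
    using holomorphic_has_inverse[OF holomorphic_on_subset[OF hol r(2)] open_ball r(4)] by blast
  have "x \<in> ball x r" "h x = 0" using r(1) root by (auto simp: h_def)
  then have zero_in: "0 \<in> h ` ball x r" by force
  show ?thesis
  proof (rule that)
    show "g 0 = x" using g(3)[OF \<open>x \<in> ball x r\<close>] \<open>h x = 0\<close> by simp
    have "deriv g 0 = - poly Q x / poly (pderiv P) x"
      using g(2)[OF \<open>x \<in> ball x r\<close>] \<open>h x = 0\<close> dh False simple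
      by (auto simp: field_simps minus_equation_iff[of "deriv g 0 * _"])
    then show "(g has_field_derivative - poly Q x / poly (pderiv P) x) (at 0)"
      using holomorphic_derivI[OF g(1) r(3) zero_in] by simp
    show "eventually (\<lambda>w. poly (P + smult w Q) (g w) = 0) (nhds 0)"
      using eventually_nhds_in_open[OF r(3) zero_in]
    proof (rule eventually_mono)
      fix w assume "w \<in> h ` ball x r"
      then obtain z where "z \<in> ball x r" "w = h z" by blast
      moreover have "poly Q z \<noteq> 0" using \<open>z \<in> ball x r\<close> r(2) by (auto simp: S_def)
      ultimately show "poly (P + smult w Q) (g w) = 0" using g(3) by (simp add: h_def)
    qed
  qed
qed

lemma simple_root_paths:
  fixes P Q :: "complex poly"
  assumes "rsquarefree P"
  obtains g where "\<And>x. poly P x = 0 \<Longrightarrow> g x 0 = x"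
    and "\<And>x. poly P x = 0 \<Longrightarrow> (g x has_field_derivative - poly Q x / poly (pderiv P) x) (at 0)"
    and "\<And>x. poly P x = 0 \<Longrightarrow> eventually (\<lambda>w. poly (P + smult w Q) (g x w) = 0) (nhds 0)"
proof -
  have "\<exists>g. \<forall>x. poly P x = 0 \<longrightarrow> g x 0 = x
      \<and> (g x has_field_derivative - poly Q x / poly (pderiv P) x) (at 0)
      \<and> eventually (\<lambda>w. poly (P + smult w Q) (g x w) = 0) (nhds 0)"
  proof (rule choice, rule allI)
    fix x
    show "\<exists>g. poly P x = 0 \<longrightarrow> g 0 = x
      \<and> (g has_field_derivative - poly Q x / poly (pderiv P) x) (at 0)
      \<and> eventually (\<lambda>w. poly (P + smult w Q) (g w) = 0) (nhds 0)"
    proof (cases "poly P x = 0")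
      case True
      then have "poly (pderiv P) x \<noteq> 0" using assms by (auto simp: rsquarefree_roots)
      with True obtain g where "g 0 = x" "(g has_field_derivative - poly Q x / poly (pderiv P) x) (at 0)"
        "eventually (\<lambda>w. poly (P + smult w Q) (g w) = 0) (nhds 0)"
        by (rule simple_root_path)
      then show ?thesis by blast
    qed simp
  qed
  then obtain g where g: "\<forall>x. poly P x = 0 \<longrightarrow> g x 0 = x
      \<and> (g x has_field_derivative - poly Q x / poly (pderiv P) x) (at 0)
      \<and> eventually (\<lambda>w. poly (P + smult w Q) (g x w) = 0) (nhds 0)" ..
  show ?thesis
  proof (rule that)
    fix x assume "poly P x = 0"
    with g show "g x 0 = x" "(g x has_field_derivative - poly Q x / poly (pderiv P) x) (at 0)"
      "eventually (\<lambda>w. poly (P + smult w Q) (g x w) = 0) (nhds 0)" by simp_all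
  qed
qed

lemma eventually_inj_on_nhds:
  fixes f :: "'a \<Rightarrow> 'b::t2_space \<Rightarrow> 'c::real_normed_vector"
  assumes "finite S" and "inj_on (\<lambda>x. f x z) S" and "\<And>x. x \<in> S \<Longrightarrow> isCont (f x) z"
  shows "eventually (\<lambda>w. inj_on (\<lambda>x. f x w) S) (nhds z)"
proof -
  have "eventually (\<lambda>w. f x w - f y w \<noteq> 0) (nhds z)" if "x \<in> S" "y \<in> S" "x \<noteq> y" for x y
  proof -
    have "f x z - f y z \<noteq> 0" using assms(2) that by (auto dest: inj_onD)
    moreover have "isCont (\<lambda>w. f x w - f y w) z" using assms(3) that by (intro continuous_intros)
    ultimately have "eventually (\<lambda>w. f x w - f y w \<noteq> 0) (at z)"
      by (metis isCont_def tendsto_imp_eventually_ne)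
    with \<open>f x z - f y z \<noteq> 0\<close> show ?thesis by (simp add: eventually_nhds_conv_at)
  qed
  then have "eventually (\<lambda>w. \<forall>x\<in>S. \<forall>y\<in>S. x \<noteq> y \<longrightarrow> f x w - f y w \<noteq> 0) (nhds z)"
    using assms(1) by (intro eventually_ball_finite ballI) auto
  then show ?thesis
    by (rule eventually_mono) (auto simp: inj_on_def)
qed

lemma eventually_proots_perturbation:
  fixes P Q :: "complex poly"
  assumes sqf: "rsquarefree P" and deg: "degree Q < degree P"
    and g: "\<And>x. poly P x = 0 \<Longrightarrow> g x 0 = x" "\<And>x. poly P x = 0 \<Longrightarrow> isCont (g x) 0"
      "\<And>x. poly P x = 0 \<Longrightarrow> eventually (\<lambda>w. poly (P + smult w Q) (g x w) = 0) (nhds 0)"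
  shows "eventually (\<lambda>w. proots (P + smult w Q) = image_mset (\<lambda>x. g x w) (mset_set {x. poly P x = 0}))
    (nhds 0)"
proof -
  define S where "S = {x. poly P x = 0}"
  have "P \<noteq> 0" using sqf by (simp add: rsquarefree_def)
  then have "finite S" by (simp add: S_def poly_roots_finite)
  have card: "card S = degree P"
    using size_proots_complex[of P] proots_rsquarefree[OF sqf] \<open>finite S\<close> by (simp add: S_def)
  have "eventually (\<lambda>w. \<forall>x\<in>S. poly (P + smult w Q) (g x w) = 0) (nhds 0)"
    using \<open>finite S\<close> g(3) by (intro eventually_ball_finite) (auto simp: S_def)
  moreover have "eventually (\<lambda>w. inj_on (\<lambda>x. g x w) S) (nhds 0)"
    using \<open>finite S\<close> g(1,2) by (intro eventually_inj_on_nhds) (auto simp: S_def inj_on_def)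
  ultimately show ?thesis
  proof eventually_elim
    case (elim w)
    have "degree (P + smult w Q) = degree P"
      using deg degree_smult_le[of w Q] by (intro degree_add_eq_left) simp
    moreover then have "P + smult w Q \<noteq> 0" using deg by auto
    ultimately show ?case
      using elim \<open>finite S\<close> card by (auto simp: S_def intro!: proots_eq_image_mset)
  qed
qed

text \<open>
  The logarithmic derivative of \<open>prod_pderiv_roots (P + smult w Q)\<close> at \<open>w = 0\<close>: a simple
  root \<open>x\<close> moves with velocity \<open>-Q(x)/P'(x)\<close>, which makes the summand equal to \<open>(Q/P')'(x)\<close>.
\<close>
definition dlog_disc :: "complex poly \<Rightarrow> complex poly \<Rightarrow> complex" where
  "dlog_disc P Q = (\<Sum>x | poly P x = 0.
     (poly (pderiv Q) x * poly (pderiv P) x - poly Q x * poly (pderiv (pderiv P)) x)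
       / poly (pderiv P) x ^ 2)"

lemma has_field_derivative_prod_pderiv_roots:
  fixes P Q :: "complex poly"
  assumes sqf: "rsquarefree P" and deg: "degree Q < degree P"
  shows "((\<lambda>w. prod_pderiv_roots (P + smult w Q)) has_field_derivative
    prod_pderiv_roots P * dlog_disc P Q) (at 0)"
proof -
  define S where "S = {x. poly P x = 0}"
  have simple: "poly (pderiv P) x \<noteq> 0" if "poly P x = 0" for x
    using sqf that by (auto simp: rsquarefree_roots)
  obtain g where g0: "\<And>x. poly P x = 0 \<Longrightarrow> g x 0 = x"
    and dg: "\<And>x. poly P x = 0 \<Longrightarrow> (g x has_field_derivative - poly Q x / poly (pderiv P) x) (at 0)"
    and root: "\<And>x. poly P x = 0 \<Longrightarrow> eventually (\<lambda>w. poly (P + smult w Q) (g x w) = 0) (nhds 0)"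
    using simple_root_paths[OF sqf, of Q] by blast
  define psi where "psi x w = poly (pderiv (P + smult w Q)) (g x w)" for x w
  have "eventually (\<lambda>w. proots (P + smult w Q) = image_mset (\<lambda>x. g x w) (mset_set S)) (nhds 0)"
    unfolding S_def using sqf deg g0 dg root
    by (intro eventually_proots_perturbation) (auto intro: DERIV_isCont)
  then have ev: "eventually (\<lambda>w. prod_pderiv_roots (P + smult w Q) = (\<Prod>x\<in>S. psi x w)) (nhds 0)"
    by (rule eventually_mono) (simp add: prod_pderiv_roots_def psi_def prod_unfold_prod_mset
        image_mset.compositionality o_def)
  have psi0: "psi x 0 = poly (pderiv P) x" if "poly P x = 0" for x
    using g0 that by (simp add: psi_def)
  have dpsi: "(psi x has_field_derivative
      (poly (pderiv Q) x * poly (pderiv P) x - poly Q x * poly (pderiv (pderiv P)) x)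
        / poly (pderiv P) x) (at 0)"
    if "poly P x = 0" for x
  proof -
    have "psi x = (\<lambda>w. poly (pderiv P) (g x w) + w * poly (pderiv Q) (g x w))"
      by (simp add: psi_def fun_eq_iff pderiv_add pderiv_smult)
    then show ?thesis
      using g0[OF that] dg[OF that] simple[OF that]
      by (auto intro!: derivative_eq_intros DERIV_chain2[OF poly_DERIV] simp: field_simps)
  qed
  have "((\<lambda>w. \<Prod>x\<in>S. psi x w) has_field_derivative
      (\<Prod>x\<in>S. psi x 0) * (\<Sum>x\<in>S. (poly (pderiv Q) x * poly (pderiv P) x
        - poly Q x * poly (pderiv (pderiv P)) x) / poly (pderiv P) x / psi x 0)) (at 0)"
    using psi0 simple dpsi by (intro has_field_derivative_prod') (auto simp: S_def)
  moreover have "(\<Prod>x\<in>S. psi x 0) = prod_pderiv_roots P"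
    unfolding prod_pderiv_roots_rsquarefree[OF sqf] S_def by (rule prod.cong) (auto simp: psi0)
  moreover have "(\<Sum>x\<in>S. (poly (pderiv Q) x * poly (pderiv P) x
      - poly Q x * poly (pderiv (pderiv P)) x) / poly (pderiv P) x / psi x 0) = dlog_disc P Q"
    unfolding dlog_disc_def S_def by (rule sum.cong) (auto simp: psi0 power2_eq_square)
  ultimately have "((\<lambda>w. \<Prod>x\<in>S. psi x w) has_field_derivative prod_pderiv_roots P * dlog_disc P Q) (at 0)"
    by simp
  then show ?thesis
    by (subst DERIV_cong_ev[OF refl ev refl])
qed

lemma dlog_disc_sum_smult:
  "dlog_disc P (\<Sum>j\<in>J. smult (c j) (Q j)) = (\<Sum>j\<in>J. c j * dlog_disc P (Q j))"
proof -
  have "pderiv (\<Sum>j\<in>J. smult (c j) (Q j)) = (\<Sum>j\<in>J. smult (c j) (pderiv (Q j)))"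
    by (induction J rule: infinite_finite_induct) (simp_all add: pderiv_add pderiv_smult)
  then have "dlog_disc P (\<Sum>j\<in>J. smult (c j) (Q j)) = (\<Sum>x | poly P x = 0. \<Sum>j\<in>J.
      c j * ((poly (pderiv (Q j)) x * poly (pderiv P) x - poly (Q j) x * poly (pderiv (pderiv P)) x)
        / poly (pderiv P) x ^ 2))"
    unfolding dlog_disc_def
    by (simp add: poly_sum sum_distrib_left sum_divide_distrib right_diff_distrib mult_ac
        flip: sum_subtractf)
  also have "\<dots> = (\<Sum>j\<in>J. c j * dlog_disc P (Q j))"
    unfolding dlog_disc_def sum_distrib_left by (rule sum.swap)
  finally show ?thesis .
qed

text \<open>Here \<open>K\<close> plays the role of \<open>Y \<mapsto> \<Gamma>(P(z), P(Y))\<close>.\<close>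
lemma dlog_disc_Gamma_kernel:
  fixes P K :: "complex poly"
  assumes sqf: "rsquarefree P" and monic: "lead_coeff P = 1" and z: "poly P z \<noteq> 0"
    and K: "[:-z, 1:] * K = smult (poly (pderiv P) z) P - smult (poly P z) (pderiv P)"
  shows "dlog_disc P K = - poly (pderiv (pderiv P)) z"
proof -
  define S where "S = {x. poly P x = 0}"
  have "P \<noteq> 0" using sqf by (simp add: rsquarefree_def)
  then have "finite S" by (simp add: S_def poly_roots_finite)
  have P: "P = (\<Prod>x\<in>S. [:-x, 1:])"
    using complex_poly_decompose_rsquarefree[OF sqf] monic by (simp add: S_def)
  have "z \<notin> S" using z by (simp add: S_def)
  have summand: "(poly (pderiv K) x * poly (pderiv P) x - poly K x * poly (pderiv (pderiv P)) x)
      / poly (pderiv P) x ^ 2 = poly P z / (z - x)^2 - poly (pderiv P) z / (z - x)"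
    if "x \<in> S" for x
  proof -
    have "poly P x = 0" using that by (simp add: S_def)
    have "poly (pderiv P) x \<noteq> 0" using sqf that by (auto simp: S_def rsquarefree_roots)
    have "z - x \<noteq> 0" using \<open>z \<notin> S\<close> that by auto
    have "poly ([:-z, 1:] * K) x = poly (smult (poly (pderiv P) z) P - smult (poly P z) (pderiv P)) x"
      by (simp only: K)
    then have K0: "poly K x = poly P z * poly (pderiv P) x / (z - x)"
      using \<open>poly P x = 0\<close> \<open>z - x \<noteq> 0\<close> by (simp add: field_simps)
    have "poly (pderiv ([:-z, 1:] * K)) x
        = poly (pderiv (smult (poly (pderiv P) z) P - smult (poly P z) (pderiv P))) x"
      by (simp only: K)
    then have K1: "poly (pderiv K) x = (poly K x - poly (pderiv P) z * poly (pderiv P) x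
        + poly P z * poly (pderiv (pderiv P)) x) / (z - x)"
      using \<open>z - x \<noteq> 0\<close>
      by (simp add: pderiv_mult pderiv_diff pderiv_smult pderiv_pCons field_simps del: mult_pCons_left)
    define u where "u = z - x"
    have "u \<noteq> 0" using \<open>z - x \<noteq> 0\<close> by (simp add: u_def)
    show ?thesis
      unfolding K1 K0 u_def[symmetric] using \<open>poly (pderiv P) x \<noteq> 0\<close> \<open>u \<noteq> 0\<close>
      by (simp add: field_simps power2_eq_square)
  qed
  have "dlog_disc P K = (\<Sum>x\<in>S. poly P z / (z - x)^2 - poly (pderiv P) z / (z - x))"
    unfolding dlog_disc_def S_def[symmetric] by (intro sum.cong refl summand)
  also have "\<dots> = poly P z * (\<Sum>x\<in>S. 1 / (z - x)^2) - poly (pderiv P) z * (\<Sum>x\<in>S. 1 / (z - x))"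
    by (simp add: sum_subtractf sum_distrib_left)
  also have "\<dots> = - poly (pderiv (pderiv P)) z"
    using sum_roots_partial_fractions[OF \<open>finite S\<close> \<open>z \<notin> S\<close>] unfolding P[symmetric] .
  finally show ?thesis .
qed

lemma has_real_derivative_Re_of_real:
  assumes "(f has_field_derivative D) (at (of_real t))"
  shows "((\<lambda>s. Re (f (of_real s))) has_real_derivative Re D) (at t)"
proof -
  have "((\<lambda>s. f (of_real s)) has_vector_derivative D) (at t)"
    using has_vector_derivative_real_field[OF assms] .
  then have "((\<lambda>s. Re (f (of_real s))) has_vector_derivative Re D) (at t)"
    by (rule bounded_linear.has_vector_derivative[OF bounded_linear_Re])
  then show ?thesis by (simp add: has_real_derivative_iff_has_vector_derivative)
qed

section \<open>The polynomial \<open>Pol d a\<close> and its discriminant\<close>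

abbreviation cPol :: "nat \<Rightarrow> (nat \<Rightarrow> real) \<Rightarrow> complex poly" where
  "cPol d a \<equiv> map_poly complex_of_real (Pol d a)"

lemma coeff_Pol: "coeff (Pol d a) k = (if k = d then 1 else if k < d then a k else 0)"
  unfolding Pol_def by (auto simp: coeff_sum coeff_monom)

lemma Pol_nonzero: "Pol d a \<noteq> 0"
  using coeff_Pol[of d a d] by auto

lemma degree_cPol [simp]: "degree (cPol d a) = d"
  by (rule antisym) (auto intro!: degree_le le_degree simp: coeff_map_poly coeff_Pol)

lemma lead_coeff_cPol: "lead_coeff (cPol d a) = 1"
  by (simp add: coeff_map_poly coeff_Pol)

lemma cPol_fun_upd:
  assumes "j < d"
  shows "cPol d (a(j := t)) = cPol d a + smult (of_real (t - a j)) (monom 1 j)"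
  by (rule poly_eqI) (use assms in \<open>auto simp: coeff_map_poly coeff_Pol coeff_monom\<close>)

lemma roots_list:
  "length (roots_list d a) = d" "cPol d a = (\<Prod>x\<leftarrow>roots_list d a. [:-x, 1:])"
proof -
  obtain xs where xs: "mset xs = proots (cPol d a)" using ex_mset by blast
  have "length xs = d \<and> cPol d a = (\<Prod>x\<leftarrow>xs. [:-x, 1:])"
    using complex_poly_decompose_multiset[of "cPol d a"] size_proots_complex[of "cPol d a"]
    by (simp flip: xs add: prod_mset_prod_list coeff_map_poly coeff_Pol flip: mset_map)
  then show "length (roots_list d a) = d" "cPol d a = (\<Prod>x\<leftarrow>roots_list d a. [:-x, 1:])"
    unfolding roots_list_def by (metis (mono_tags, lifting) someI)+
qed

lemma disc_eq_prod_pderiv_roots: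
  "disc d a = Re ((-1) ^ (d * (d - 1) div 2) * prod_pderiv_roots (cPol d a))"
proof -
  define x where "x i = roots_list d a ! i" for i
  define \<sigma> :: complex where "\<sigma> = (-1) ^ (d * (d - 1) div 2)"
  have xs: "roots_list d a = map x [0..<d]"
    unfolding x_def by (metis roots_list(1) map_nth)
  have P: "cPol d a = (\<Prod>i<d. [:-x i, 1:])"
    using roots_list(2)[of d a] by (simp add: xs prod.distinct_set_conv_list[symmetric] atLeast0LessThan)
  have "prod_pderiv_roots (cPol d a) = (\<Prod>k<d. poly (pderiv (cPol d a)) (x k))"
    unfolding prod_pderiv_roots_def
    using roots_list(2)[of d a] proots_prod_list_linear_factors[of "roots_list d a"]
    by (simp add: xs prod_mset_prod_list prod.distinct_set_conv_list[symmetric] atLeast0LessThan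
        flip: mset_map)
  also have "\<dots> = (\<Prod>k<d. \<Prod>i\<in>{..<d}-{k}. x k - x i)"
    unfolding P by (intro prod.cong refl poly_pderiv_prod_linear_factors_at_root) simp
  also have "\<dots> = \<sigma> * (\<Prod>j<d. \<Prod>i<j. (x j - x i)^2)"
    unfolding \<sigma>_def by (rule prod_differences_off_diagonal)
  finally have "\<sigma> * prod_pderiv_roots (cPol d a) = \<sigma>^2 * (\<Prod>j<d. \<Prod>i<j. (x j - x i)^2)"
    by (simp add: power2_eq_square)
  moreover have "\<sigma>^2 = 1"
    unfolding \<sigma>_def by (simp flip: power_mult add: power_mult_distrib)
  ultimately show ?thesis
    unfolding disc_def x_def \<sigma>_def Let_def by simp
qed

lemma rsquarefree_cPol_if_disc_nonzero:
  assumes "disc d a \<noteq> 0"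
  shows "rsquarefree (cPol d a)"
proof -
  have "prod_pderiv_roots (cPol d a) \<noteq> 0"
    using assms disc_eq_prod_pderiv_roots[of d a] by auto
  then have "poly (pderiv (cPol d a)) x \<noteq> 0" if "poly (cPol d a) x = 0" for x
    using that Pol_nonzero[of d a]
    by (auto simp: prod_pderiv_roots_def map_poly_eq_0_iff)
  then show ?thesis by (auto simp: rsquarefree_roots)
qed

lemma disc_partial_eq:
  assumes nz: "disc d a \<noteq> 0" and j: "j < d"
  shows "disc_partial d a j
    = Re ((-1) ^ (d * (d - 1) div 2) * prod_pderiv_roots (cPol d a) * dlog_disc (cPol d a) (monom 1 j))"
proof -
  define \<sigma> :: complex where "\<sigma> = (-1) ^ (d * (d - 1) div 2)"
  define F where "F w = \<sigma> * prod_pderiv_roots (cPol d a + smult (w - of_real (a j)) (monom 1 j))" for w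
  have disc_upd: "disc d (a(j := t)) = Re (F (of_real t))" for t
    by (simp add: F_def \<sigma>_def disc_eq_prod_pderiv_roots cPol_fun_upd[OF j])
  have "((\<lambda>w. prod_pderiv_roots (cPol d a + smult w (monom 1 j))) has_field_derivative
      prod_pderiv_roots (cPol d a) * dlog_disc (cPol d a) (monom 1 j)) (at (of_real (a j) - of_real (a j)))"
    using j rsquarefree_cPol_if_disc_nonzero[OF nz]
    by (simp add: degree_monom_eq has_field_derivative_prod_pderiv_roots)
  then have "((\<lambda>w. prod_pderiv_roots (cPol d a + smult (w - of_real (a j)) (monom 1 j)))
      has_field_derivative prod_pderiv_roots (cPol d a) * dlog_disc (cPol d a) (monom 1 j) * 1)
      (at (of_real (a j)))"
    by (rule DERIV_chain2) (auto intro!: derivative_eq_intros)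
  then have "(F has_field_derivative \<sigma> * (prod_pderiv_roots (cPol d a) * dlog_disc (cPol d a) (monom 1 j)))
      (at (of_real (a j)))"
    unfolding F_def by (intro DERIV_cmult) simp
  then have "((\<lambda>t. disc d (a(j := t))) has_real_derivative
      Re (\<sigma> * prod_pderiv_roots (cPol d a) * dlog_disc (cPol d a) (monom 1 j))) (at (a j))"
    unfolding disc_upd mult.assoc by (rule has_real_derivative_Re_of_real)
  then show ?thesis
    unfolding disc_partial_def \<sigma>_def by (rule DERIV_imp_deriv)
qed

lemma cPol_Gamma_kernel:
  assumes Gamma: "\<forall>X Y :: real. (Y - X) * (\<Sum>i<d. \<Sum>j<d. G i j * X ^ i * Y ^ j)
      = poly (pderiv (Pol d a)) X * poly (Pol d a) Y - poly (pderiv (Pol d a)) Y * poly (Pol d a) X"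
  shows "[:- of_real X, 1:] * (\<Sum>j<d. smult (of_real (\<Sum>i<d. G i j * X ^ i)) (monom 1 j))
    = smult (poly (pderiv (cPol d a)) (of_real X)) (cPol d a)
      - smult (poly (cPol d a) (of_real X)) (pderiv (cPol d a))"
proof (rule complex_poly_eqI_on_reals)
  fix Y :: real
  have "(\<Sum>j<d. (\<Sum>i<d. G i j * X ^ i) * Y ^ j) = (\<Sum>i<d. \<Sum>j<d. G i j * X ^ i * Y ^ j)"
    by (subst sum.swap) (simp add: sum_distrib_right)
  then have "complex_of_real ((Y - X) * (\<Sum>j<d. (\<Sum>i<d. G i j * X ^ i) * Y ^ j))
      = of_real (poly (pderiv (Pol d a)) X * poly (Pol d a) Y - poly (pderiv (Pol d a)) Y * poly (Pol d a) X)"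
    using Gamma by simp
  then show "poly ([:- of_real X, 1:] * (\<Sum>j<d. smult (of_real (\<Sum>i<d. G i j * X ^ i)) (monom 1 j)))
      (of_real Y) = poly (smult (poly (pderiv (cPol d a)) (of_real X)) (cPol d a)
      - smult (poly (cPol d a) (of_real X)) (pderiv (cPol d a))) (of_real Y)"
    by (simp add: poly_sum poly_monom poly_map_poly_of_real pderiv_map_poly_of_real algebra_simps)
qed

lemma disc_Gamma_off_roots:
  assumes Gamma: "\<forall>X Y :: real. (Y - X) * (\<Sum>i<d. \<Sum>j<d. G i j * X ^ i * Y ^ j)
      = poly (pderiv (Pol d a)) X * poly (Pol d a) Y - poly (pderiv (Pol d a)) Y * poly (Pol d a) X"
    and nz: "disc d a \<noteq> 0" and X: "poly (Pol d a) X \<noteq> 0"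
  shows "(\<Sum>i<d. \<Sum>j<d. G i j * X ^ i * disc_partial d a j)
    = - poly (pderiv (pderiv (Pol d a))) X * disc d a"
proof -
  define c where "c j = (\<Sum>i<d. G i j * X ^ i)" for j
  define A :: complex where "A = (-1) ^ (d * (d - 1) div 2) * prod_pderiv_roots (cPol d a)"
  have "dlog_disc (cPol d a) (\<Sum>j<d. smult (of_real (c j)) (monom 1 j))
      = - poly (pderiv (pderiv (cPol d a))) (of_real X)"
    using X unfolding c_def
    by (intro dlog_disc_Gamma_kernel rsquarefree_cPol_if_disc_nonzero[OF nz] lead_coeff_cPol
        cPol_Gamma_kernel[OF Gamma]) (simp add: poly_map_poly_of_real)
  then have kernel: "(\<Sum>j<d. of_real (c j) * dlog_disc (cPol d a) (monom 1 j))
      = - of_real (poly (pderiv (pderiv (Pol d a))) X)"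
    by (simp add: dlog_disc_sum_smult poly_map_poly_of_real pderiv_map_poly_of_real)
  have "(\<Sum>i<d. \<Sum>j<d. G i j * X ^ i * disc_partial d a j) = (\<Sum>j<d. c j * disc_partial d a j)"
    unfolding c_def by (subst sum.swap) (simp add: sum_distrib_right)
  also have "\<dots> = Re (A * (\<Sum>j<d. of_real (c j) * dlog_disc (cPol d a) (monom 1 j)))"
    by (simp add: disc_partial_eq[OF nz] A_def sum_distrib_left Re_sum mult_ac)
  also have "\<dots> = - poly (pderiv (pderiv (Pol d a))) X * disc d a"
    unfolding kernel by (simp add: A_def disc_eq_prod_pderiv_roots)
  finally show ?thesis .
qed

theorem proposition5p3:
  fixes d :: nat and a :: "nat \<Rightarrow> real" and G :: "nat \<Rightarrow> nat \<Rightarrow> real"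
  assumes Gamma: "\<forall>X Y :: real. (Y - X) * (\<Sum>i<d. \<Sum>j<d. G i j * X ^ i * Y ^ j)
      = poly (pderiv (Pol d a)) X * poly (Pol d a) Y - poly (pderiv (Pol d a)) Y * poly (Pol d a) X"
    and nz: "disc d a \<noteq> 0"
  shows "\<forall>X :: real. (\<Sum>i<d. \<Sum>j<d. G i j * X ^ i * disc_partial d a j) / disc d a
      = - poly (pderiv (pderiv (Pol d a))) X"
proof
  fix X :: real
  define L where "L = (\<Sum>i<d. monom (\<Sum>j<d. G i j * disc_partial d a j) i)"
  have poly_L: "poly L Y = (\<Sum>i<d. \<Sum>j<d. G i j * Y ^ i * disc_partial d a j)" for Y
    by (simp add: L_def poly_sum poly_monom sum_distrib_left mult_ac)
  have "L = smult (- disc d a) (pderiv (pderiv (Pol d a)))"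
    using Pol_nonzero[of d a] by (rule poly_eqI_off_roots) (simp add: poly_L disc_Gamma_off_roots[OF Gamma nz])
  then have "(\<Sum>i<d. \<Sum>j<d. G i j * X ^ i * disc_partial d a j)
      = - poly (pderiv (pderiv (Pol d a))) X * disc d a"
    by (simp flip: poly_L)
  then show "(\<Sum>i<d. \<Sum>j<d. G i j * X ^ i * disc_partial d a j) / disc d a
      = - poly (pderiv (pderiv (Pol d a))) X"
    using nz by simp
qed

end
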